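(* Let $(A, b, c)$ be a $k$-level LP instance such that, except for the last ($k$-th) player's problem, there are no linear constraints (i.e., $m_l = 0$ for all $l = 1, \ldots, k-1$; all linear constraints appear only in the $k$-th player's problem). Then, for any $\lambda \in \mathbb{R}$ with $\lambda > 0$, the feasible set of the instance $(A, \lambda b, c)$ equals $\lambda$ times the feasible set of the instance $(A, b, c)$.
   Context: A $k$-level LP instance $(A,b,c)$ has data $A_{li} \in \mathbb{Q}^{m_l \times n_i}$, $b_l \in \mathbb{Q}^{m_l}$, $c_{li} \in \mathbb{Q}^{n_i}$. Player $l$ chooses $x_l \in \mathbb{R}^{n_l}$ after players $1,\ldots,l-1$. The $l$-th player's problem, given $x_1,\ldots,x_{l-1}$, is $\inf_{x_l,\ldots,x_k}\{\sum_{i=l}^k c_{li}^\top x_i : \sum_{i=1}^k A_{li}x_i \ge b_l,\ (x_{l+1},\ldots,x_k) \in \mathcal{S}(\text{problem of player } l+1 \text{ given } x_1,\ldots,x_l)\}$, and the $k$-th player's problem is $\inf_{x_k}\{c_{kk}^\top x_k : \sum_{i=1}^k A_{ki}x_i \ge b_k\}$. The instance is identified with the first player's problem; its feasible set is the set of feasible $(x_1,\ldots,x_k)$ of the first player's problem. $\mathcal{S}(\cdot)$ denotes the optimal solution set (optimistic setting). *)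

theory Defs
  imports Complex_Main
begin

text \<open>Levels are numbered 1..k.
  n i : dimension of player i's variable x_i; m l : number of rows of player l's constraints.
  A l i r j : entry (r,j) of the block A_{li}  (r < m l, j < n i).
  b l r     : entry r of b_l.
  c l i j   : entry j of c_{li}.
  A joint decision (x_1,...,x_k) is a function x with x i j = entry j of x_i;
  all entries outside 1 \<le> i \<le> k, j < n i are required to be 0.\<close>

definition lp_points :: "(nat \<Rightarrow> nat) \<Rightarrow> nat \<Rightarrow> (nat \<Rightarrow> nat \<Rightarrow> real) set" where
  "lp_points n k = {x. \<forall>i j. (i < 1 \<or> k < i \<or> n i \<le> j) \<longrightarrow> x i j = 0}"

definition lp_cons ::
  "(nat \<Rightarrow> nat \<Rightarrow> nat \<Rightarrow> nat \<Rightarrow> real) \<Rightarrow> (nat \<Rightarrow> nat \<Rightarrow> real) \<Rightarrow> (nat \<Rightarrow> nat) \<Rightarrow> (nat \<Rightarrow> nat)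
    \<Rightarrow> nat \<Rightarrow> nat \<Rightarrow> (nat \<Rightarrow> nat \<Rightarrow> real) \<Rightarrow> bool" where
  "lp_cons A b n m k l x =
     (\<forall>r < m l. (\<Sum>i = 1..k. \<Sum>j < n i. A l i r j * x i j) \<ge> b l r)"

definition lp_obj ::
  "(nat \<Rightarrow> nat \<Rightarrow> nat \<Rightarrow> real) \<Rightarrow> (nat \<Rightarrow> nat) \<Rightarrow> nat \<Rightarrow> nat \<Rightarrow> (nat \<Rightarrow> nat \<Rightarrow> real) \<Rightarrow> real" where
  "lp_obj c n k l x = (\<Sum>i = l..k. \<Sum>j < n i. c l i j * x i j)"

definition lp_agree :: "nat \<Rightarrow> (nat \<Rightarrow> nat \<Rightarrow> real) \<Rightarrow> (nat \<Rightarrow> nat \<Rightarrow> real) \<Rightarrow> bool" where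
  "lp_agree l x y = (\<forall>i < l. x i = y i)"

text \<open>lp_opt ... d x: the tail (x_l,...,x_k) of x, with l = k - d, is an optimal solution
  (optimistic setting) of player l's problem given x_1,...,x_{l-1}.\<close>
primrec lp_opt ::
  "(nat \<Rightarrow> nat \<Rightarrow> nat \<Rightarrow> nat \<Rightarrow> real) \<Rightarrow> (nat \<Rightarrow> nat \<Rightarrow> real) \<Rightarrow> (nat \<Rightarrow> nat \<Rightarrow> nat \<Rightarrow> real)
    \<Rightarrow> (nat \<Rightarrow> nat) \<Rightarrow> (nat \<Rightarrow> nat) \<Rightarrow> nat \<Rightarrow> nat \<Rightarrow> (nat \<Rightarrow> nat \<Rightarrow> real) \<Rightarrow> bool" where
  "lp_opt A b c n m k 0 x =
     (x \<in> lp_points n k \<and> lp_cons A b n m k k x \<and>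
      (\<forall>y \<in> lp_points n k. lp_agree k x y \<and> lp_cons A b n m k k y
          \<longrightarrow> lp_obj c n k k x \<le> lp_obj c n k k y))"
| "lp_opt A b c n m k (Suc d) x =
     (let l = k - Suc d;
          F = (\<lambda>z. z \<in> lp_points n k \<and> lp_cons A b n m k l z \<and> lp_opt A b c n m k d z)
      in F x \<and> (\<forall>y. lp_agree l x y \<and> F y \<longrightarrow> lp_obj c n k l x \<le> lp_obj c n k l y))"

text \<open>Feasible set of the instance = feasible set of player 1's problem.\<close>
definition lp_feasible ::
  "(nat \<Rightarrow> nat \<Rightarrow> nat \<Rightarrow> nat \<Rightarrow> real) \<Rightarrow> (nat \<Rightarrow> nat \<Rightarrow> real) \<Rightarrow> (nat \<Rightarrow> nat \<Rightarrow> nat \<Rightarrow> real)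
    \<Rightarrow> (nat \<Rightarrow> nat) \<Rightarrow> (nat \<Rightarrow> nat) \<Rightarrow> nat \<Rightarrow> (nat \<Rightarrow> nat \<Rightarrow> real) set" where
  "lp_feasible A b c n m k =
     {x \<in> lp_points n k. lp_cons A b n m k 1 x \<and> (2 \<le> k \<longrightarrow> lp_opt A b c n m k (k - 2) x)}"

end

theory Submission
  imports Defs
begin

text \<open>The map \<open>x \<mapsto> \<lambda> x\<close> is a bijection of decision vectors which carries every player's
  constraint set for \<open>b\<close> onto the one for \<open>\<lambda> b\<close> and multiplies every objective by \<open>\<lambda> > 0\<close>.
  Hence it preserves optimality, level by level from the last player upwards.\<close>

definition lp_scale :: "real \<Rightarrow> (nat \<Rightarrow> nat \<Rightarrow> real) \<Rightarrow> nat \<Rightarrow> nat \<Rightarrow> real" where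
  "lp_scale lam x = (\<lambda>i j. lam * x i j)"

lemma surj_all_iff: "surj f \<Longrightarrow> (\<forall>y. P y) \<longleftrightarrow> (\<forall>x. P (f x))"
  by (metis surjD)

lemma surj_image_eqI:
  assumes "surj f" and "\<And>x. f x \<in> T \<longleftrightarrow> x \<in> S"
  shows "T = f ` S"
  using assms by (auto, metis imageI surjD)

lemma lp_scale_inverse: "lam \<noteq> 0 \<Longrightarrow> lp_scale lam (lp_scale (1 / lam) x) = x"
  by (simp add: lp_scale_def)

lemma surj_lp_scale: "lam \<noteq> 0 \<Longrightarrow> surj (lp_scale lam)"
  by (metis lp_scale_inverse surjI)

lemma lp_points_scale_iff:
  "lam \<noteq> 0 \<Longrightarrow> lp_scale lam x \<in> lp_points n k \<longleftrightarrow> x \<in> lp_points n k"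
  by (simp add: lp_scale_def lp_points_def)

lemma lp_agree_scale_iff:
  "lam \<noteq> 0 \<Longrightarrow> lp_agree l (lp_scale lam x) (lp_scale lam y) \<longleftrightarrow> lp_agree l x y"
  by (simp add: lp_agree_def lp_scale_def fun_eq_iff)

lemma lp_obj_scale: "lp_obj c n k l (lp_scale lam x) = lam * lp_obj c n k l x"
  by (simp add: lp_obj_def lp_scale_def sum_distrib_left algebra_simps)

lemma lp_cons_scale_iff:
  assumes "lam > 0"
  shows "lp_cons A (\<lambda>l r. lam * b l r) n m k l (lp_scale lam x) \<longleftrightarrow> lp_cons A b n m k l x"
proof -
  have "(\<Sum>i = 1..k. \<Sum>j < n i. A l i r j * lp_scale lam x i j)
      = lam * (\<Sum>i = 1..k. \<Sum>j < n i. A l i r j * x i j)" for r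
    by (simp add: lp_scale_def sum_distrib_left algebra_simps)
  then show ?thesis
    using assms by (simp add: lp_cons_def)
qed

lemma lp_opt_scale_iff:
  assumes "lam > 0"
  shows "lp_opt A (\<lambda>l r. lam * b l r) c n m k d (lp_scale lam x) \<longleftrightarrow> lp_opt A b c n m k d x"
proof -
  have surj: "surj (lp_scale lam)"
    using assms by (simp add: surj_lp_scale)
  note scale_simps = lp_points_scale_iff lp_cons_scale_iff lp_obj_scale lp_agree_scale_iff
  show ?thesis
  proof (induction d arbitrary: x)
    case 0
    show ?case
      unfolding lp_opt.simps Ball_def
      by (subst surj_all_iff[OF surj]) (use assms in \<open>simp add: scale_simps\<close>)
  next
    case (Suc d)
    show ?case
      unfolding lp_opt.simps Let_def
      by (subst surj_all_iff[OF surj]) (use assms in \<open>simp add: Suc scale_simps\<close>)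
  qed
qed

lemma lp_feasible_scale_iff:
  assumes "lam > 0"
  shows "lp_scale lam x \<in> lp_feasible A (\<lambda>l r. lam * b l r) c n m k \<longleftrightarrow> x \<in> lp_feasible A b c n m k"
  using assms by (simp add: lp_feasible_def lp_points_scale_iff lp_cons_scale_iff lp_opt_scale_iff)

theorem lemma3p2:
  fixes A :: "nat \<Rightarrow> nat \<Rightarrow> nat \<Rightarrow> nat \<Rightarrow> real"
    and b :: "nat \<Rightarrow> nat \<Rightarrow> real"
    and c :: "nat \<Rightarrow> nat \<Rightarrow> nat \<Rightarrow> real"
    and n m :: "nat \<Rightarrow> nat" and k :: nat and lam :: real
  assumes "1 \<le> k"
    and A_rat: "\<forall>l\<in>{1..k}. \<forall>i\<in>{1..k}. \<forall>r < m l. \<forall>j < n i. A l i r j \<in> \<rat>"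
    and b_rat: "\<forall>l\<in>{1..k}. \<forall>r < m l. b l r \<in> \<rat>"
    and c_rat: "\<forall>l\<in>{1..k}. \<forall>i\<in>{l..k}. \<forall>j < n i. c l i j \<in> \<rat>"
    and no_upper_cons: "\<forall>l\<in>{1..<k}. m l = 0"
    and "lam > 0"
  shows "lp_feasible A (\<lambda>l r. lam * b l r) c n m k
           = (\<lambda>x. \<lambda>i j. lam * x i j) ` lp_feasible A b c n m k"
proof -
  have "lp_feasible A (\<lambda>l r. lam * b l r) c n m k = lp_scale lam ` lp_feasible A b c n m k"
    using \<open>lam > 0\<close> by (intro surj_image_eqI surj_lp_scale lp_feasible_scale_iff) auto
  moreover have "lp_scale lam = (\<lambda>x. \<lambda>i j. lam * x i j)"
    by (simp add: fun_eq_iff lp_scale_def)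
  ultimately show ?thesis
    by simp
qed

end
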